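(* If $C\subseteq\mathbb{R}$ is infinite and $C\neq\mathbb{R}$, then there is a two-point selection $f$ on $\mathbb{R}$ such that $C$ is not closed in the topology $\tau_f$.
   Context: A two-point selection on $\mathbb{R}$ is a function $f$ from the set of two-element subsets of $\mathbb{R}$ to $\mathbb{R}$ with $f(F)\in F$. Write $r<_f s$ if $f(\{r,s\})=r$ ($r\ne s$), $(\leftarrow,r)_f=\{x: x<_f r\}$, $(r,\rightarrow)_f=\{x: r<_f x\}$. The topology $\tau_f$ on $\mathbb{R}$ is generated (as a subbase) by all sets $(\leftarrow,r)_f$, $(r,\rightarrow)_f$, $r\in\mathbb{R}$. *)

theory Defs
  imports "HOL-Analysis.Analysis"
begin

definition two_point_selection :: "(real set \<Rightarrow> real) \<Rightarrow> bool" where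
  "two_point_selection f \<longleftrightarrow> (\<forall>F. card F = 2 \<longrightarrow> f F \<in> F)"

definition sel_less :: "(real set \<Rightarrow> real) \<Rightarrow> real \<Rightarrow> real \<Rightarrow> bool" where
  "sel_less f r s \<longleftrightarrow> r \<noteq> s \<and> f {r, s} = r"

definition sel_left_ray :: "(real set \<Rightarrow> real) \<Rightarrow> real \<Rightarrow> real set" where
  "sel_left_ray f r = {x. sel_less f x r}"

definition sel_right_ray :: "(real set \<Rightarrow> real) \<Rightarrow> real \<Rightarrow> real set" where
  "sel_right_ray f r = {x. sel_less f r x}"

definition sel_topology :: "(real set \<Rightarrow> real) \<Rightarrow> real topology" where
  "sel_topology f = topology_generated_by
     ((\<lambda>r. sel_left_ray f r) ` UNIV \<union> (\<lambda>r. sel_right_ray f r) ` UNIV)"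

end

theory Submission
  imports Defs
begin

text \<open>Fix p outside C and an injective sequence c in C. Selecting the point of smaller weight,
  for an injective weight w : R -> R with w (c m) -> w p, turns every ray of the selection into
  the w-preimage of an open ray, so tau_f is coarser than the topology pulled back along w.
  Hence every tau_f-neighbourhood of p contains almost all c m, and p lies in the closure of C.\<close>

lemma two_point_selection_arg_min_on:
  fixes w :: "real \<Rightarrow> 'a::linorder"
  shows "two_point_selection (arg_min_on w)"
  unfolding two_point_selection_def
proof (intro allI impI)
  fix F :: "real set"
  assume "card F = 2"
  then have "finite F" "F \<noteq> {}"
    by (auto intro: card_ge_0_finite)
  then show "arg_min_on w F \<in> F"
    by (rule arg_min_if_finite(1))
qed

lemma arg_min_on_doubleton:
  fixes w :: "'a \<Rightarrow> 'b::linorder"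
  assumes "inj w" "x \<noteq> y"
  shows "arg_min_on w {x, y} = (if w x < w y then x else y)"
  unfolding arg_min_on_def
  using assms by (intro arg_min_inj_eq) (auto intro: inj_on_subset simp: inj_eq)

lemma sel_less_arg_min_on:
  fixes w :: "real \<Rightarrow> 'a::linorder"
  assumes "inj w"
  shows "sel_less (arg_min_on w) x y \<longleftrightarrow> w x < w y"
proof (cases "x = y")
  case False
  then show ?thesis
    using arg_min_on_doubleton[OF assms False] by (simp add: sel_less_def)
qed (simp add: sel_less_def)

lemma topspace_sel_topology:
  assumes "two_point_selection f"
  shows "topspace (sel_topology f) = UNIV"
proof -
  have "x \<in> sel_left_ray f (x + 1) \<union> sel_right_ray f (x + 1)" for x
  proof -
    have "card {x, x + 1} = 2"
      by simp
    then consider "f {x, x + 1} = x" | "f {x, x + 1} = x + 1"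
      using assms unfolding two_point_selection_def by blast
    then show ?thesis
      by cases (simp_all add: sel_left_ray_def sel_right_ray_def sel_less_def insert_commute)
  qed
  then show ?thesis
    unfolding sel_topology_def by auto
qed

lemma openin_sel_topology_pullback:
  fixes w :: "real \<Rightarrow> 'a::linorder_topology"
  assumes "\<And>x y. sel_less f x y \<longleftrightarrow> w x < w y"
    and "openin (sel_topology f) U"
  shows "openin (pullback_topology UNIV w euclidean) U"
proof (rule generate_topology_on_coarsest[OF istopology_openin])
  show "generate_topology_on ((\<lambda>r. sel_left_ray f r) ` UNIV \<union> (\<lambda>r. sel_right_ray f r) ` UNIV) U"
    using assms(2) by (simp add: sel_topology_def openin_topology_generated_by_iff)
next
  fix S
  assume "S \<in> (\<lambda>r. sel_left_ray f r) ` UNIV \<union> (\<lambda>r. sel_right_ray f r) ` UNIV"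
  then obtain r where "S = w -` {..<w r} \<or> S = w -` {w r<..}"
    by (auto simp: sel_left_ray_def sel_right_ray_def assms(1))
  then show "openin (pullback_topology UNIV w euclidean) S"
    unfolding openin_pullback_topology
    by (metis Int_UNIV_right open_greaterThan open_lessThan open_openin)
qed

lemma not_closedin_sel_topology:
  fixes w :: "real \<Rightarrow> 'a::linorder_topology"
  assumes "two_point_selection f" "\<And>x y. sel_less f x y \<longleftrightarrow> w x < w y"
    and "(\<lambda>m. w (c m)) \<longlonglongrightarrow> w p" "range c \<subseteq> C" "p \<notin> C"
  shows "\<not> closedin (sel_topology f) C"
proof
  assume "closedin (sel_topology f) C"
  then have "openin (sel_topology f) (- C)"
    by (simp add: closedin_def topspace_sel_topology[OF assms(1)] Compl_eq_Diff_UNIV)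
  then have "openin (pullback_topology UNIV w euclidean) (- C)"
    using openin_sel_topology_pullback[OF assms(2)] by blast
  then obtain V where "open V" "- C = w -` V"
    by (auto simp: openin_pullback_topology)
  then have "eventually (\<lambda>m. w (c m) \<in> V) sequentially"
    using assms(3,5) by (intro topological_tendstoD) auto
  then obtain m where "c m \<in> - C"
    using \<open>- C = w -` V\<close> by (auto simp: eventually_sequentially)
  then show False
    using assms(4) by blast
qed

lemma inj_weight_along_sequence:
  fixes c :: "nat \<Rightarrow> real"
  assumes "inj c" "p \<notin> range c"
  obtains w :: "real \<Rightarrow> real" where "inj w" "(\<lambda>m. w (c m)) \<longlonglongrightarrow> w p"
proof
  define w where "w x =
    (if x = p then 0 else if x \<in> range c then inverse (real (Suc (inv c x))) else 2 + exp x)" for x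
  have w_c: "w (c m) = inverse (real (Suc m))" for m
    using assms by (auto simp: w_def)
  show "(\<lambda>m. w (c m)) \<longlonglongrightarrow> w p"
    using LIMSEQ_inverse_real_of_nat unfolding w_c by (simp add: w_def)
  have w_p: "w x = 0 \<longleftrightarrow> x = p" for x
    using add_pos_pos[OF _ exp_gt_zero, of 2 x] by (auto simp: w_def)
  have w_less: "w (c m) < w x" if "x \<notin> range c" "x \<noteq> p" for x m
  proof -
    have "w (c m) \<le> 1"
      unfolding w_c by (simp add: field_simps)
    also have "1 < w x"
      using that by (simp add: w_def add_pos_pos)
    finally show ?thesis .
  qed
  show "inj w"
  proof (rule injI)
    fix x y
    assume eq: "w x = w y"
    consider "x = p" | m where "x = c m" | "x \<notin> range c" "x \<noteq> p"
      by blast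
    then show "x = y"
    proof cases
      case 1
      then show ?thesis
        using eq w_p by metis
    next
      case (2 m)
      then have "y \<noteq> p"
        using eq w_p assms(2) by (metis rangeI)
      moreover have "y \<in> range c"
        using eq w_less[of y m] \<open>y \<noteq> p\<close> 2 by force
      ultimately obtain n where "y = c n"
        by blast
      then show ?thesis
        using eq 2 w_c by simp
    next
      case 3
      then have "y \<noteq> p"
        using eq w_p by metis
      moreover have "y \<notin> range c"
        using eq w_less[of x] 3 by force
      ultimately show ?thesis
        using eq 3 by (simp add: w_def)
    qed
  qed
qed

theorem theorem3p14:
  fixes C :: "real set"
  assumes "infinite C" and "C \<noteq> UNIV"
  shows "\<exists>f. two_point_selection f \<and> \<not> closedin (sel_topology f) C"
proof -
  obtain p where "p \<notin> C"
    using assms(2) by blast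
  obtain c :: "nat \<Rightarrow> real" where "inj c" "range c \<subseteq> C"
    using infinite_countable_subset[OF assms(1)] by blast
  obtain w :: "real \<Rightarrow> real" where "inj w" "(\<lambda>m. w (c m)) \<longlonglongrightarrow> w p"
    using inj_weight_along_sequence[OF \<open>inj c\<close>] \<open>p \<notin> C\<close> \<open>range c \<subseteq> C\<close> by blast
  then have "\<not> closedin (sel_topology (arg_min_on w)) C"
    using two_point_selection_arg_min_on sel_less_arg_min_on \<open>range c \<subseteq> C\<close> \<open>p \<notin> C\<close>
    by (intro not_closedin_sel_topology) auto
  then show ?thesis
    using two_point_selection_arg_min_on by blast
qed

end
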